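(* Let $\mathcal{H}$ be finite-dimensional, let $\{O_i\}$ be a finite set of self-adjoint operators on $\mathcal{H}$, let $\mathcal{L}$ be a Lindblad generator on $\mathfrak{B}(\mathcal{H})$, and let $\mathscr{N}^\perp=\mathrm{span}\{(\mathcal{L}^\dagger)^k(O_i):k\ge0,\ \forall i\}$. Then $\mathrm{alg}(\mathscr{N}^\perp)\subsetneq\mathfrak{B}(\mathcal{H})$ if and only if there exists a non-trivial $\{O_i\}$-observable-dependent symmetry for $\mathcal{L}$. Furthermore, $\mathrm{alg}(\mathscr{N}^\perp)=\mathbb{C}\bar{\mathscr{G}}'$, where $\bar{\mathscr{G}}$ is the largest group of $\{O_i\}$-observable-dependent symmetries for $\mathcal{L}$.
   Context: A Lindblad generator has the form $\mathcal{L}(\rho)=-i[H,\rho]+\sum_u\big(L_u\rho L_u^\dagger-\tfrac12\{L_u^\dagger L_u,\rho\}\big)$; $\mathcal{L}^\dagger$ is its Hilbert–Schmidt adjoint. A unitary $S$ on $\mathcal{H}$ is an $\{O_i\}$-observable-dependent symmetry (ODS) of $\mathcal{L}$ if $S(\mathcal{L}^\dagger)^n(O_i)S^\dagger=(\mathcal{L}^\dagger)^n(O_i)$ for all integers $n\ge0$ and all $i$; the set of all such unitaries forms a group. Non-trivial means not a scalar multiple of the identity. $\mathrm{alg}(\cdot)$ denotes the smallest $*$-algebra containing a set; $\mathbb{C}\mathscr{G}'=\{X:[S,X]=0\ \forall S\in\mathscr{G}\}$. *)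

theory Defs
  imports "HOL-Analysis.Analysis"
begin

text \<open>Operators on a finite-dimensional Hilbert space H = complex^'n are
  represented as complex 'n x 'n matrices; the product is matrix product (**).\<close>

type_synonym 'n op = "complex^'n^'n"

definition adj :: "'n::finite op \<Rightarrow> 'n op" where
  "adj A = (\<chi> i j. cnj (A $ j $ i))"

definition csc :: "complex \<Rightarrow> 'n::finite op \<Rightarrow> 'n op" where
  "csc c A = (\<chi> i j. c * A $ i $ j)"

definition mtrace :: "'n::finite op \<Rightarrow> complex" where
  "mtrace A = (\<Sum>i\<in>UNIV. A $ i $ i)"

definition hs_inner :: "'n::finite op \<Rightarrow> 'n op \<Rightarrow> complex" where
  "hs_inner X Y = mtrace (adj X ** Y)"

definition hs_adjoint :: "('n::finite op \<Rightarrow> 'n op) \<Rightarrow> ('n op \<Rightarrow> 'n op)" where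
  "hs_adjoint T = (THE T'. \<forall>X Y. hs_inner X (T Y) = hs_inner (T' X) Y)"

definition commutator :: "'n::finite op \<Rightarrow> 'n op \<Rightarrow> 'n op" where
  "commutator A B = A ** B - B ** A"

definition anticommutator :: "'n::finite op \<Rightarrow> 'n op \<Rightarrow> 'n op" where
  "anticommutator A B = A ** B + B ** A"

definition lindblad :: "'n::finite op \<Rightarrow> 'n op list \<Rightarrow> 'n op \<Rightarrow> 'n op" where
  "lindblad H Ls \<rho> = csc (-\<i>) (commutator H \<rho>)
     + sum_list (map (\<lambda>L. L ** \<rho> ** adj L - csc (1/2) (anticommutator (adj L ** L) \<rho>)) Ls)"

definition unitary_op :: "'n::finite op \<Rightarrow> bool" where
  "unitary_op S \<longleftrightarrow> adj S ** S = mat 1 \<and> S ** adj S = mat 1"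

definition ods :: "('n::finite op \<Rightarrow> 'n op) \<Rightarrow> 'n op set \<Rightarrow> 'n op \<Rightarrow> bool" where
  "ods Ldag Os S \<longleftrightarrow> unitary_op S \<and>
     (\<forall>k::nat. \<forall>B\<in>Os. S ** (Ldag ^^ k) B ** adj S = (Ldag ^^ k) B)"

definition trivial_op :: "'n::finite op \<Rightarrow> bool" where
  "trivial_op S \<longleftrightarrow> (\<exists>c. S = mat c)"

definition cspan :: "'n::finite op set \<Rightarrow> 'n op set" where
  "cspan S = {X. \<exists>F c. finite F \<and> F \<subseteq> S \<and> X = (\<Sum>v\<in>F. csc (c v) v)}"

definition star_alg :: "'n::finite op set \<Rightarrow> bool" where
  "star_alg A \<longleftrightarrow> mat 1 \<in> A
     \<and> (\<forall>X\<in>A. \<forall>Y\<in>A. X + Y \<in> A \<and> X ** Y \<in> A)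
     \<and> (\<forall>X\<in>A. \<forall>c. csc c X \<in> A)
     \<and> (\<forall>X\<in>A. adj X \<in> A)"

definition alg :: "'n::finite op set \<Rightarrow> 'n op set" where
  "alg S = \<Inter>{A. star_alg A \<and> S \<subseteq> A}"

definition commutant :: "'n::finite op set \<Rightarrow> 'n op set" where
  "commutant G = {X. \<forall>S\<in>G. S ** X = X ** S}"

end

theory Submission
  imports Defs
begin

text \<open>The observable-dependent symmetries are exactly the unitaries commuting with the set T of
  all \<open>(\<L>\<^sup>\<dagger>)\<^sup>k O\<^sub>i\<close>, i.e. the unitary group of the commutant \<open>A'\<close> of \<open>A = alg(span T)\<close>.
  Every element of \<open>A'\<close> is a combination of two Hermitian ones, and a Hermitian \<open>h \<in> A'\<close> is a
  rational function of its Cayley transform \<open>(h - i)(h + i)\<^sup>-\<^sup>1\<close>, a unitary in \<open>A'\<close>; so the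
  commutant of the symmetry group is \<open>A''\<close>. In finite dimensions \<open>A'' = A\<close>: the orthogonal
  projection P onto A for the Hilbert--Schmidt inner product is left A-linear, which puts the
  operators \<open>v \<mapsto> P(v e\<^sub>l\<^sup>T) e\<^sub>k\<close> into \<open>A'\<close>, and an element x of \<open>A''\<close> commuting with all of
  them satisfies \<open>P x = x\<close>. Finally A is proper iff its commutant contains a non-scalar unitary,
  since only scalars commute with all matrix units. Neither the Lindblad form of the generator
  nor the hypotheses on H and the \<open>O\<^sub>i\<close> play any role.\<close>

lemma matrix_mult_entry: "((X::'n::finite op) ** Y) $ i $ j = (\<Sum>k\<in>UNIV. X$i$k * Y$k$j)"
  by (simp add: matrix_matrix_mult_def)

lemma csc_entry [simp]: "csc c X $ i $ j = c * X $ i $ j"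
  by (simp add: csc_def)

lemma adj_entry [simp]: "adj X $ i $ j = cnj (X $ j $ i)"
  by (simp add: adj_def)

lemma mat_entry: "(mat c :: 'n::finite op) $ i $ j = (if i = j then c else 0)"
  by (simp add: mat_def)

lemma adj_adj [simp]: "adj (adj X) = X"
  by (simp add: vec_eq_iff)

lemma adj_mat [simp]: "adj (mat c :: 'n::finite op) = mat (cnj c)"
  by (simp add: vec_eq_iff mat_entry)

lemma adj_mult: "adj ((X::'n::finite op) ** Y) = adj Y ** adj X"
  by (simp add: vec_eq_iff matrix_mult_entry mult.commute)

lemma csc_csc [simp]: "csc c (csc d X) = csc (c * d) X"
  by (simp add: vec_eq_iff)

lemma csc_one [simp]: "csc 1 X = X"
  by (simp add: vec_eq_iff)

lemma csc_zero_left [simp]: "csc 0 X = 0"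
  by (simp add: vec_eq_iff)

lemma csc_diff: "csc c (X - Y) = csc c X - csc c Y"
  by (simp add: vec_eq_iff right_diff_distrib)

lemma csc_mult_left: "csc c (X::'n::finite op) ** Y = csc c (X ** Y)"
  by (simp add: vec_eq_iff matrix_mult_entry sum_distrib_left mult.assoc)

lemma csc_mult_right: "(X::'n::finite op) ** csc c Y = csc c (X ** Y)"
  by (simp add: vec_eq_iff matrix_mult_entry sum_distrib_left algebra_simps)

lemma mat_mult_left: "mat c ** (X::'n::finite op) = csc c X"
  by (simp add: vec_eq_iff matrix_mult_entry mat_entry if_distrib if_distribR cong: if_cong)

lemma mat_mult_right: "(X::'n::finite op) ** mat c = csc c X"
  by (simp add: vec_eq_iff matrix_mult_entry mat_entry if_distrib if_distribR mult.commute
      cong: if_cong)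

lemma matrix_add_rdistrib: "((X::'n::finite op) + Y) ** Z = X ** Z + Y ** Z"
  by (simp add: vec_eq_iff matrix_mult_entry sum.distrib distrib_right)

lemma matrix_diff_rdistrib: "((X::'n::finite op) - Y) ** Z = X ** Z - Y ** Z"
  by (simp add: vec_eq_iff matrix_mult_entry sum_subtractf left_diff_distrib)

lemma matrix_diff_ldistrib: "(Z::'n::finite op) ** (X - Y) = Z ** X - Z ** Y"
  by (simp add: vec_eq_iff matrix_mult_entry sum_subtractf right_diff_distrib)

lemma scaleR_eq_csc: "r *\<^sub>R (X::'n::finite op) = csc (of_real r) X"
  unfolding vec_eq_iff by (simp add: scaleR_conv_of_real[where 'a=complex])

definition matrix_unit :: "'n::finite \<Rightarrow> 'n \<Rightarrow> 'n op" where
  "matrix_unit j l = (\<chi> a b. if a = j \<and> b = l then 1 else 0)"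

lemma matrix_mult_matrix_unit_entry:
  "((X::'n::finite op) ** matrix_unit j l) $ a $ b = (if b = l then X $ a $ j else 0)"
  by (simp add: matrix_mult_entry matrix_unit_def if_distrib if_distribR cong: if_cong)

lemma matrix_unit_mult_matrix_entry:
  "(matrix_unit j l ** (X::'n::finite op)) $ a $ b = (if a = j then X $ l $ b else 0)"
  by (simp add: matrix_mult_entry matrix_unit_def if_distrib if_distribR cong: if_cong)

lemma matrix_unit_expansion: "(X::'n::finite op) = (\<Sum>j\<in>UNIV. \<Sum>l\<in>UNIV. csc (X$j$l) (matrix_unit j l))"
proof -
  have "(\<Sum>j\<in>UNIV. \<Sum>l\<in>UNIV. csc (X$j$l) (matrix_unit j l)) $ a $ b
      = (\<Sum>j\<in>UNIV. \<Sum>l\<in>UNIV. if a = j \<and> b = l then X$j$l else 0)" for a b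
    by (simp add: matrix_unit_def if_distrib cong: if_cong)
  moreover have "(\<Sum>j\<in>UNIV. \<Sum>l\<in>UNIV. if a = j \<and> b = l then X$j$l else 0) = X $ a $ b" for a b
    by (simp add: if_if_eq_conj[symmetric] sum.If_cases)
  ultimately show ?thesis
    by (simp add: vec_eq_iff)
qed

lemma sum_matrix_unit_diagonal: "(\<Sum>l\<in>UNIV. matrix_unit l l) = (mat 1 :: 'n::finite op)"
  by (auto simp: vec_eq_iff matrix_unit_def mat_entry intro: sum.neutral)

lemma star_alg_zero: "star_alg A \<Longrightarrow> 0 \<in> A"
  unfolding star_alg_def by (metis csc_zero_left)

lemma star_alg_diff:
  assumes "star_alg A" and "X \<in> A" and "Y \<in> A"
  shows "X - Y \<in> A"
proof -
  have "X - Y = X + csc (-1) Y"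
    by (simp add: vec_eq_iff)
  then show ?thesis
    using assms unfolding star_alg_def by metis
qed

lemma star_alg_alg: "star_alg (alg S)"
  unfolding alg_def star_alg_def by auto

lemma alg_least: "star_alg A \<Longrightarrow> S \<subseteq> A \<Longrightarrow> alg S \<subseteq> A"
  unfolding alg_def by auto

lemma subset_alg: "S \<subseteq> alg S"
  unfolding alg_def by auto

lemma star_alg_sum:
  assumes "star_alg A" and "finite F" and "\<And>v. v \<in> F \<Longrightarrow> f v \<in> A"
  shows "sum f F \<in> A"
  using assms(2,3)
proof (induction F rule: finite_induct)
  case empty
  then show ?case
    using star_alg_zero[OF assms(1)] by simp
next
  case (insert x F)
  then show ?case
    using assms(1) unfolding star_alg_def by simp
qed

lemma cspan_subset: "star_alg A \<Longrightarrow> S \<subseteq> A \<Longrightarrow> cspan S \<subseteq> A"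
  unfolding cspan_def by (auto intro!: star_alg_sum simp: star_alg_def)

lemma subset_cspan: "S \<subseteq> cspan S"
proof
  fix X assume "X \<in> S"
  then show "X \<in> cspan S"
    unfolding cspan_def by (intro CollectI exI[of _ "{X}"] exI[of _ "\<lambda>_. 1"]) simp
qed

definition commutes :: "'n::finite op \<Rightarrow> 'n op \<Rightarrow> bool" where
  "commutes X Y \<longleftrightarrow> X ** Y = Y ** X"

lemma commutes_sym: "commutes X Y \<Longrightarrow> commutes Y X"
  by (simp add: commutes_def)

lemma commutes_refl: "commutes X X"
  by (simp add: commutes_def)

lemma commutes_mat: "commutes X (mat c)"
  by (simp add: commutes_def mat_mult_left mat_mult_right)

lemma commutes_add: "commutes X Y \<Longrightarrow> commutes X Z \<Longrightarrow> commutes X (Y + Z)"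
  by (simp add: commutes_def matrix_add_ldistrib matrix_add_rdistrib)

lemma commutes_diff: "commutes X Y \<Longrightarrow> commutes X Z \<Longrightarrow> commutes X (Y - Z)"
  by (simp add: commutes_def matrix_diff_ldistrib matrix_diff_rdistrib)

lemma commutes_csc: "commutes X Y \<Longrightarrow> commutes X (csc c Y)"
  by (simp add: commutes_def csc_mult_left csc_mult_right)

lemma commutes_mult: "commutes X Y \<Longrightarrow> commutes X Z \<Longrightarrow> commutes X (Y ** Z)"
  unfolding commutes_def by (metis matrix_mul_assoc)

lemma commutes_inverse: "commutes X Y \<Longrightarrow> g ** X = mat 1 \<Longrightarrow> X ** g = mat 1 \<Longrightarrow> commutes g Y"
  unfolding commutes_def by (metis matrix_mul_assoc matrix_mul_lid matrix_mul_rid)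

lemma commutes_adj: "commutes X Y \<Longrightarrow> commutes (adj X) (adj Y)"
  by (simp add: commutes_def adj_mult[symmetric])

lemma in_commutant_iff: "X \<in> commutant G \<longleftrightarrow> (\<forall>S\<in>G. commutes S X)"
  by (auto simp: commutant_def commutes_def)

lemma unitary_op_adj: "unitary_op S \<Longrightarrow> unitary_op (adj S)"
  by (simp add: unitary_op_def)

lemma unitary_conj_eq_iff_commutes:
  assumes "unitary_op S"
  shows "S ** X ** adj S = X \<longleftrightarrow> commutes S X"
proof
  assume conj: "S ** X ** adj S = X"
  have "S ** X = S ** X ** (adj S ** S)"
    using assms by (simp add: unitary_op_def)
  also have "\<dots> = X ** S"
    using conj by (simp add: matrix_mul_assoc)
  finally show "commutes S X"
    by (simp add: commutes_def)
next
  assume "commutes S X"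
  then have "S ** X ** adj S = X ** (S ** adj S)"
    by (simp add: commutes_def matrix_mul_assoc)
  then show "S ** X ** adj S = X"
    using assms by (simp add: unitary_op_def)
qed

lemma unitary_commutes_adj:
  assumes "unitary_op S" and "commutes S X"
  shows "commutes (adj S) X"
proof -
  have "S ** X ** adj S = X"
    using assms unitary_conj_eq_iff_commutes by blast
  then have "adj S ** X = adj S ** (S ** X ** adj S)"
    by simp
  also have "\<dots> = X ** adj S"
    using assms(1) by (simp add: unitary_op_def matrix_mul_assoc)
  finally show ?thesis
    by (simp add: commutes_def)
qed

lemma star_alg_commutant:
  assumes "\<forall>S\<in>G. adj S \<in> G"
  shows "star_alg (commutant G)"
  unfolding star_alg_def
proof (intro conjI ballI allI)
  fix X Y assume "X \<in> commutant G" and "Y \<in> commutant G"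
  then show "X + Y \<in> commutant G" and "X ** Y \<in> commutant G"
    by (simp_all add: in_commutant_iff commutes_add commutes_mult)
next
  fix X c assume "X \<in> commutant G"
  then show "csc c X \<in> commutant G"
    by (simp add: in_commutant_iff commutes_csc)
next
  fix X assume "X \<in> commutant G"
  then show "adj X \<in> commutant G"
    using assms commutes_adj[of "adj S" X for S] by (simp add: in_commutant_iff)
qed (simp add: in_commutant_iff commutes_mat)

lemma commutes_matrix_units_imp_trivial:
  assumes "\<And>j l. commutes S (matrix_unit j l)"
  shows "trivial_op S"
proof -
  have entry: "S $ i $ j = (if i = j then S $ l $ l else 0)" for i j l
  proof -
    have "(S ** matrix_unit j l) $ i $ l = (matrix_unit j l ** S) $ i $ l"
      using assms[of j l] by (simp add: commutes_def)
    then show ?thesis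
      by (simp add: matrix_mult_matrix_unit_entry matrix_unit_mult_matrix_entry)
  qed
  have "S = mat (S $ l $ l)" for l
    by (simp add: vec_eq_iff mat_entry) (metis entry)
  then show ?thesis
    unfolding trivial_op_def by blast
qed

lemma commutant_eq_UNIV_iff: "commutant G = UNIV \<longleftrightarrow> (\<forall>S\<in>G. trivial_op S)"
proof
  assume "commutant G = UNIV"
  then have "commutes S (matrix_unit j l)" if "S \<in> G" for S j l
    using that in_commutant_iff[of "matrix_unit j l" G] by blast
  then show "\<forall>S\<in>G. trivial_op S"
    using commutes_matrix_units_imp_trivial by blast
next
  assume "\<forall>S\<in>G. trivial_op S"
  then have "X \<in> commutant G" for X
    by (auto simp: in_commutant_iff trivial_op_def commutes_def mat_mult_left mat_mult_right)
  then show "commutant G = UNIV"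
    by blast
qed

section \<open>Hermitian elements of a commutant via their Cayley transforms\<close>

lemma hermitian_plus_i_kernel:
  fixes h :: "'n::finite op"
  assumes herm: "adj h = h" and v: "(h + mat \<i>) *v v = 0"
  shows "v = 0"
proof -
  define q where "q = (\<Sum>j\<in>UNIV. \<Sum>k\<in>UNIV. cnj (v$j) * h$j$k * v$k)"
  define s where "s = (\<Sum>j\<in>UNIV. (cmod (v$j))\<^sup>2)"
  have hv: "(\<Sum>k\<in>UNIV. h$j$k * v$k) = - \<i> * v$j" for j
  proof -
    have "((h + mat \<i>) *v v) $ j
        = (\<Sum>k\<in>UNIV. h$j$k * v$k) + (\<Sum>k\<in>UNIV. (if j = k then \<i> else 0) * v$k)"
      by (simp add: matrix_vector_mult_def mat_entry distrib_right sum.distrib)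
    also have "\<dots> = (\<Sum>k\<in>UNIV. h$j$k * v$k) + \<i> * v$j"
      by (simp add: if_distrib if_distribR cong: if_cong)
    finally show ?thesis
      using v by (simp add: eq_neg_iff_add_eq_0)
  qed
  have "q = (\<Sum>j\<in>UNIV. cnj (v$j) * (\<Sum>k\<in>UNIV. h$j$k * v$k))"
    by (simp add: q_def sum_distrib_left mult.assoc)
  also have "\<dots> = - \<i> * of_real s"
    unfolding hv s_def of_real_sum complex_norm_square sum_distrib_left by (simp add: mult_ac)
  finally have q_imaginary: "q = - \<i> * of_real s" .
  have "cnj q = (\<Sum>j\<in>UNIV. \<Sum>k\<in>UNIV. v$j * h$k$j * cnj (v$k))"
    using herm by (simp add: q_def flip: adj_entry)
  also have "\<dots> = q"
    by (subst sum.swap) (simp add: q_def mult_ac)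
  finally have "cnj q = q" .
  with q_imaginary have "s = 0"
    by simp
  then show ?thesis
    by (simp add: s_def vec_eq_iff sum_nonneg_eq_0_iff)
qed

lemma hermitian_plus_i_invertible:
  fixes h :: "'n::finite op"
  assumes "adj h = h"
  obtains g where "g ** (h + mat \<i>) = mat 1" and "(h + mat \<i>) ** g = mat 1"
  using hermitian_plus_i_kernel[OF assms] matrix_left_invertible_ker matrix_left_right_inverse
  by metis

lemma unitary_cayley_transform:
  fixes h g :: "'n::finite op"
  assumes herm: "adj h = h" and g: "g ** (h + mat \<i>) = mat 1" "(h + mat \<i>) ** g = mat 1"
  shows "unitary_op ((h - mat \<i>) ** g)"
proof -
  let ?k = "h + mat \<i>" and ?l = "h - mat \<i>" and ?u = "(h - mat \<i>) ** g"
  have "?l = ?k - mat (2 * \<i>)"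
    by (simp add: vec_eq_iff mat_entry)
  then have kl: "commutes ?k ?l"
    by (metis commutes_diff commutes_refl commutes_mat)
  have adj_k: "adj ?k = ?l" and adj_l: "adj ?l = ?k"
    using herm by (simp_all add: vec_eq_iff mat_entry)
  have adj_g: "adj g ** ?l = mat 1" "?l ** adj g = mat 1"
    using arg_cong[OF g(2), of adj] arg_cong[OF g(1), of adj] unfolding adj_mult adj_k by simp_all
  have adj_u: "adj ?u = adj g ** ?k"
    unfolding adj_mult adj_l ..
  have "adj ?u ** ?u = adj g ** (?k ** ?l) ** g"
    unfolding adj_u by (simp add: matrix_mul_assoc)
  also have "\<dots> = adj g ** ?l ** (?k ** g)"
    using kl by (simp add: commutes_def matrix_mul_assoc)
  finally have "adj ?u ** ?u = mat 1"
    using g adj_g by simp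
  have "?u ** adj ?u = g ** (?l ** adj g) ** ?k"
    using commutes_inverse[OF kl g] unfolding adj_u commutes_def by (simp add: matrix_mul_assoc)
  then have "?u ** adj ?u = mat 1"
    using g adj_g by simp
  with \<open>adj ?u ** ?u = mat 1\<close> show ?thesis
    by (simp add: unitary_op_def)
qed

lemma inverse_eq_cayley_transform:
  fixes h g :: "'n::finite op"
  assumes "(h + mat \<i>) ** g = mat 1"
  shows "g = csc (1 / (2 * \<i>)) (mat 1 - (h - mat \<i>) ** g)"
proof -
  have "mat 1 - (h - mat \<i>) ** g = ((h + mat \<i>) - (h - mat \<i>)) ** g"
    by (simp only: matrix_diff_rdistrib assms)
  also have "(h + mat \<i>) - (h - mat \<i>) = mat (2 * \<i>)"
    by (simp add: vec_eq_iff mat_entry)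
  finally show ?thesis
    by (simp add: mat_mult_left)
qed

lemma commutes_hermitian_if_commutes_unitaries:
  fixes h x :: "'n::finite op"
  assumes herm: "adj h = h" and h: "h \<in> commutant A"
    and x: "\<And>u. unitary_op u \<Longrightarrow> u \<in> commutant A \<Longrightarrow> commutes u x"
  shows "commutes h x"
proof -
  obtain g where g: "g ** (h + mat \<i>) = mat 1" "(h + mat \<i>) ** g = mat 1"
    using hermitian_plus_i_invertible[OF herm] by blast
  let ?u = "(h - mat \<i>) ** g"
  have "commutes a ?u" if "a \<in> A" for a
  proof -
    have "commutes a (h + mat \<i>)" "commutes a (h - mat \<i>)"
      using h that by (simp_all add: in_commutant_iff commutes_add commutes_diff commutes_mat)
    then have "commutes a g"
      using commutes_inverse[OF commutes_sym g] commutes_sym by blast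
    with \<open>commutes a (h - mat \<i>)\<close> show ?thesis
      by (simp add: commutes_mult)
  qed
  then have "commutes ?u x"
    using x unitary_cayley_transform[OF herm g] by (simp add: in_commutant_iff)
  then have "commutes x g"
    using commutes_sym by (subst inverse_eq_cayley_transform[OF g(2)])
      (blast intro: commutes_csc commutes_diff commutes_mat)
  then have "commutes x (h + mat \<i>)"
    using commutes_inverse[OF commutes_sym g(2,1)] commutes_sym by blast
  then have "commutes x (h + mat \<i> - mat \<i>)"
    by (rule commutes_diff[OF _ commutes_mat])
  then show ?thesis
    by (simp add: commutes_sym)
qed

lemma in_commutant_commutant_if_commutes_unitaries:
  assumes adj_closed: "\<forall>a\<in>A. adj a \<in> A"
    and x: "\<And>u. unitary_op u \<Longrightarrow> u \<in> commutant A \<Longrightarrow> commutes u x"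
  shows "x \<in> commutant (commutant A)"
  unfolding in_commutant_iff[of x]
proof
  fix M assume M: "M \<in> commutant A"
  have alg: "star_alg (commutant A)"
    using adj_closed by (rule star_alg_commutant)
  define h\<^sub>1 where "h\<^sub>1 = M + adj M"
  define h\<^sub>2 where "h\<^sub>2 = csc \<i> (M - adj M)"
  have "h\<^sub>1 \<in> commutant A" "h\<^sub>2 \<in> commutant A"
    using M alg star_alg_diff[OF alg] unfolding h\<^sub>1_def h\<^sub>2_def star_alg_def by blast+
  moreover have "adj h\<^sub>1 = h\<^sub>1" "adj h\<^sub>2 = h\<^sub>2"
    by (simp_all add: h\<^sub>1_def h\<^sub>2_def add.commute vec_eq_iff algebra_simps)
  ultimately have "commutes x h\<^sub>1" "commutes x h\<^sub>2"
    using commutes_hermitian_if_commutes_unitaries x by (blast intro: commutes_sym)+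
  moreover have "M = csc (1/2) h\<^sub>1 + csc (-\<i>/2) h\<^sub>2"
    by (simp add: h\<^sub>1_def h\<^sub>2_def vec_eq_iff field_simps)
  ultimately show "commutes M x"
    by (metis commutes_add commutes_csc commutes_sym)
qed

section \<open>The double commutant theorem\<close>

lemma inner_op_eq: "(X::'n::finite op) \<bullet> Y = Re (\<Sum>i\<in>UNIV. \<Sum>k\<in>UNIV. cnj (X$i$k) * Y$i$k)"
  by (simp add: inner_vec_def inner_complex_def Re_sum)

lemma inner_csc_right: "(W::'n::finite op) \<bullet> csc c Z = csc (cnj c) W \<bullet> Z"
  by (simp add: inner_op_eq mult.assoc mult.left_commute)

lemma inner_mult_right: "(W::'n::finite op) \<bullet> (X ** Z) = (adj X ** W) \<bullet> Z"
proof -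
  have "(\<Sum>i\<in>UNIV. \<Sum>k\<in>UNIV. cnj (W$i$k) * (X ** Z)$i$k)
      = (\<Sum>i\<in>UNIV. \<Sum>k\<in>UNIV. \<Sum>m\<in>UNIV. cnj (W$i$k) * X$i$m * Z$m$k)"
    by (simp add: matrix_mult_entry sum_distrib_left mult.assoc)
  also have "\<dots> = (\<Sum>i\<in>UNIV. \<Sum>m\<in>UNIV. \<Sum>k\<in>UNIV. cnj (W$i$k) * X$i$m * Z$m$k)"
    by (rule sum.cong[OF refl], rule sum.swap)
  also have "\<dots> = (\<Sum>m\<in>UNIV. \<Sum>k\<in>UNIV. \<Sum>i\<in>UNIV. cnj (W$i$k) * X$i$m * Z$m$k)"
    by (subst sum.swap) (rule sum.cong[OF refl], rule sum.swap)
  also have "\<dots> = (\<Sum>m\<in>UNIV. \<Sum>k\<in>UNIV. cnj ((adj X ** W)$m$k) * Z$m$k)"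
    by (simp add: matrix_mult_entry sum_distrib_left sum_distrib_right mult_ac)
  finally show ?thesis
    by (simp add: inner_op_eq)
qed

text \<open>Orthogonality refers to \<open>\<bullet>\<close>, the real part of the Hilbert--Schmidt inner product;
  since A is a complex subspace, this is the usual orthogonal projection.\<close>

definition orth_proj :: "'n::finite op set \<Rightarrow> 'n op \<Rightarrow> 'n op" where
  "orth_proj A Y = (SOME p. p \<in> A \<and> (\<forall>w\<in>A. w \<bullet> (Y - p) = 0))"

context
  fixes A :: "'n::finite op set"
  assumes alg: "star_alg A"
begin

lemma orth_proj_exists: "\<exists>p. p \<in> A \<and> (\<forall>w\<in>A. w \<bullet> (Y - p) = 0)"
proof -
  have "subspace A"
    using alg star_alg_zero[OF alg] by (auto simp: subspace_def scaleR_eq_csc star_alg_def)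
  then have span_A: "span A = A"
    by (simp add: span_eq_iff)
  obtain p z where "p \<in> span A" and "\<And>w. w \<in> span A \<Longrightarrow> orthogonal z w" and "Y = p + z"
    using orthogonal_subspace_decomp_exists[of A Y] by blast
  then show ?thesis
    using span_A by (auto simp: orthogonal_def inner_commute)
qed

lemma orth_proj: "orth_proj A Y \<in> A" "\<forall>w\<in>A. w \<bullet> (Y - orth_proj A Y) = 0"
  unfolding orth_proj_def using someI_ex[OF orth_proj_exists] by blast+

lemma orth_proj_unique:
  assumes "p \<in> A" and "\<forall>w\<in>A. w \<bullet> (Y - p) = 0"
  shows "orth_proj A Y = p"
proof -
  let ?q = "orth_proj A Y"
  have "?q - p \<in> A"
    using star_alg_diff[OF alg] orth_proj assms by blast
  then have "(?q - p) \<bullet> (Y - p) - (?q - p) \<bullet> (Y - ?q) = 0"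
    using assms orth_proj by simp
  then have "(?q - p) \<bullet> (?q - p) = 0"
    by (simp add: inner_diff_right)
  then show ?thesis
    by simp
qed

lemma orth_proj_id: "Y \<in> A \<Longrightarrow> orth_proj A Y = Y"
  by (rule orth_proj_unique) auto

lemma orth_proj_add: "orth_proj A (Y + Z) = orth_proj A Y + orth_proj A Z"
proof (rule orth_proj_unique)
  show "orth_proj A Y + orth_proj A Z \<in> A"
    using orth_proj alg unfolding star_alg_def by blast
  have "Y + Z - (orth_proj A Y + orth_proj A Z) = (Y - orth_proj A Y) + (Z - orth_proj A Z)"
    by simp
  then show "\<forall>w\<in>A. w \<bullet> (Y + Z - (orth_proj A Y + orth_proj A Z)) = 0"
    using orth_proj by (simp only: inner_add_right) simp
qed

lemma orth_proj_sum: "finite F \<Longrightarrow> orth_proj A (sum f F) = (\<Sum>v\<in>F. orth_proj A (f v))"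
  by (induction F rule: finite_induct) (simp_all add: orth_proj_id star_alg_zero[OF alg] orth_proj_add)

lemma orth_proj_csc: "orth_proj A (csc c Y) = csc c (orth_proj A Y)"
proof (rule orth_proj_unique)
  show "csc c (orth_proj A Y) \<in> A"
    using orth_proj alg by (auto simp: star_alg_def)
  show "\<forall>w\<in>A. w \<bullet> (csc c Y - csc c (orth_proj A Y)) = 0"
  proof
    fix w assume "w \<in> A"
    then have "csc (cnj c) w \<in> A"
      using alg by (auto simp: star_alg_def)
    then show "w \<bullet> (csc c Y - csc c (orth_proj A Y)) = 0"
      using orth_proj by (simp add: csc_diff[symmetric] inner_csc_right)
  qed
qed

text \<open>Since \<open>adj a\<close> maps A into itself, left multiplication by a preserves the orthogonal
  complement of A.\<close>

lemma orth_proj_mult_left: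
  assumes a: "a \<in> A"
  shows "orth_proj A (a ** Y) = a ** orth_proj A Y"
proof (rule orth_proj_unique)
  show "a ** orth_proj A Y \<in> A"
    using a orth_proj alg by (auto simp: star_alg_def)
  show "\<forall>w\<in>A. w \<bullet> (a ** Y - a ** orth_proj A Y) = 0"
  proof
    fix w assume "w \<in> A"
    then have "adj a ** w \<in> A"
      using a alg by (auto simp: star_alg_def)
    then show "w \<bullet> (a ** Y - a ** orth_proj A Y) = 0"
      using orth_proj by (simp add: matrix_diff_ldistrib[symmetric] inner_mult_right)
  qed
qed

lemma orth_proj_entry:
  "orth_proj A Y $ i $ k = (\<Sum>j\<in>UNIV. \<Sum>l\<in>UNIV. Y$j$l * orth_proj A (matrix_unit j l) $ i $ k)"
proof -
  have "orth_proj A Y = orth_proj A (\<Sum>j\<in>UNIV. \<Sum>l\<in>UNIV. csc (Y$j$l) (matrix_unit j l))"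
    by (subst matrix_unit_expansion[of Y]) (rule refl)
  also have "\<dots> = (\<Sum>j\<in>UNIV. \<Sum>l\<in>UNIV. csc (Y$j$l) (orth_proj A (matrix_unit j l)))"
    by (simp add: orth_proj_sum orth_proj_csc)
  finally show ?thesis
    by simp
qed

text \<open>The operator \<open>v \<mapsto> P(v e\<^sub>l\<^sup>T) e\<^sub>k\<close>, where P is the orthogonal projection onto A.\<close>

definition proj_transfer :: "'n \<Rightarrow> 'n \<Rightarrow> 'n op" where
  "proj_transfer l k = (\<chi> i j. orth_proj A (matrix_unit j l) $ i $ k)"

lemma proj_transfer_in_commutant: "proj_transfer l k \<in> commutant A"
  unfolding in_commutant_iff commutes_def
proof (intro ballI)
  fix a assume a: "a \<in> A"
  have "(a ** proj_transfer l k) $ i $ j = (proj_transfer l k ** a) $ i $ j" for i j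
  proof -
    have "(a ** proj_transfer l k) $ i $ j = orth_proj A (a ** matrix_unit j l) $ i $ k"
      by (simp add: orth_proj_mult_left[OF a] matrix_mult_entry proj_transfer_def)
    also have "\<dots> = (\<Sum>j'\<in>UNIV. \<Sum>l'\<in>UNIV.
        (if l' = l then a $ j' $ j else 0) * orth_proj A (matrix_unit j' l') $ i $ k)"
      by (subst orth_proj_entry) (simp only: matrix_mult_matrix_unit_entry)
    also have "\<dots> = (proj_transfer l k ** a) $ i $ j"
      by (simp add: if_distrib if_distribR matrix_mult_entry proj_transfer_def mult.commute
          cong: if_cong)
    finally show ?thesis .
  qed
  then show "a ** proj_transfer l k = proj_transfer l k ** a"
    by (simp add: vec_eq_iff)
qed

theorem commutant_commutant_subset: "commutant (commutant A) \<subseteq> A"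
proof
  fix x assume x: "x \<in> commutant (commutant A)"
  let ?P = "orth_proj A"
  have "?P x $ i $ k = x $ i $ k" for i k
  proof -
    have "?P x $ i $ k = (\<Sum>j\<in>UNIV. \<Sum>l\<in>UNIV. proj_transfer l k $ i $ j * x $ j $ l)"
      by (subst orth_proj_entry) (simp add: proj_transfer_def mult.commute)
    also have "\<dots> = (\<Sum>l\<in>UNIV. (proj_transfer l k ** x) $ i $ l)"
      by (subst sum.swap) (simp add: matrix_mult_entry)
    also have "\<dots> = (\<Sum>l\<in>UNIV. (x ** proj_transfer l k) $ i $ l)"
      using x proj_transfer_in_commutant by (simp add: in_commutant_iff commutes_def)
    also have "\<dots> = (\<Sum>l\<in>UNIV. \<Sum>m\<in>UNIV. x $ i $ m * ?P (matrix_unit l l) $ m $ k)"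
      by (simp add: matrix_mult_entry proj_transfer_def)
    also have "\<dots> = (\<Sum>m\<in>UNIV. x $ i $ m * (\<Sum>l\<in>UNIV. ?P (matrix_unit l l)) $ m $ k)"
      by (subst sum.swap) (simp add: sum_distrib_left)
    also have "(\<Sum>l\<in>UNIV. ?P (matrix_unit l l)) = mat 1"
      using alg by (simp add: orth_proj_sum[symmetric] sum_matrix_unit_diagonal orth_proj_id
          star_alg_def)
    finally show ?thesis
      by (simp add: mat_entry if_distrib cong: if_cong)
  qed
  then have "?P x = x"
    by (simp add: vec_eq_iff)
  then show "x \<in> A"
    using orth_proj(1)[of x] by simp
qed

end

section \<open>Observable-dependent symmetries\<close>

theorem alg_cspan_eq_commutant_unitaries:
  "alg (cspan T) = commutant {S. unitary_op S \<and> (\<forall>X\<in>T. commutes S X)}"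
    (is "?A = commutant ?G")
proof
  have adj_closed: "\<forall>S\<in>?G. adj S \<in> ?G"
    by (simp add: unitary_op_adj unitary_commutes_adj)
  have "T \<subseteq> commutant ?G"
    by (auto simp: in_commutant_iff)
  then show "?A \<subseteq> commutant ?G"
    using star_alg_commutant[OF adj_closed] by (intro alg_least cspan_subset)
next
  have T_A: "T \<subseteq> ?A"
    using subset_cspan subset_alg by blast
  show "commutant ?G \<subseteq> ?A"
  proof
    fix x assume x: "x \<in> commutant ?G"
    have "commutes u x" if "unitary_op u" and "u \<in> commutant ?A" for u
    proof -
      have "u \<in> ?G"
        using that T_A commutes_sym unfolding in_commutant_iff by blast
      with x show ?thesis
        unfolding in_commutant_iff by blast
    qed
    then have "x \<in> commutant (commutant ?A)"
      using star_alg_alg[of "cspan T"]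
      by (intro in_commutant_commutant_if_commutes_unitaries) (simp_all add: star_alg_def)
    then show "x \<in> ?A"
      using commutant_commutant_subset[OF star_alg_alg] by blast
  qed
qed

lemma ods_iff_commutes:
  "ods Ldag Os S \<longleftrightarrow> unitary_op S \<and> (\<forall>X\<in>{(Ldag ^^ k) B | k B. B \<in> Os}. commutes S X)"
  unfolding ods_def using unitary_conj_eq_iff_commutes by blast

theorem theorem7:
  fixes H :: "complex^'n::finite^'n" and Ls :: "(complex^'n^'n) list"
    and Os :: "(complex^'n^'n) set"
  assumes "adj H = H"
    and "finite Os"
    and "\<forall>B\<in>Os. adj B = B"
  shows "let Ldag = hs_adjoint (lindblad H Ls);
             Nperp = cspan {(Ldag ^^ k) B | k B. B \<in> Os};
             G = {S. ods Ldag Os S}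
         in (alg Nperp \<subset> UNIV \<longleftrightarrow> (\<exists>S. ods Ldag Os S \<and> \<not> trivial_op S))
            \<and> alg Nperp = commutant G"
proof -
  define Ldag where "Ldag = hs_adjoint (lindblad H Ls)"
  define T where "T = {(Ldag ^^ k) B | k B. B \<in> Os}"
  have alg_eq: "alg (cspan T) = commutant {S. ods Ldag Os S}"
    unfolding T_def ods_iff_commutes by (rule alg_cspan_eq_commutant_unitaries)
  then have "alg (cspan T) \<subset> UNIV \<longleftrightarrow> (\<exists>S. ods Ldag Os S \<and> \<not> trivial_op S)"
    using commutant_eq_UNIV_iff[of "{S. ods Ldag Os S}"] by auto
  with alg_eq show ?thesis
    by (simp add: Let_def Ldag_def T_def)
qed

end
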